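(* Let $\mathcal M$ be a map in class $2_{\{0,1\}}$ with underlying graph $\Gamma$. Then the boundaries of the faces of $\mathcal M$ are $\mathrm{Aut}(\mathcal M)$-symmetric consistent cycles of $\Gamma$.
   Context: A map is a $2$-cell embedding of a connected simple graph $\Gamma$ (its underlying graph) in a closed surface; the components of the complement are the faces. All maps considered are polytopal: flags (triangles of the barycentric subdivision) correspond bijectively to incident triples (vertex, edge, face). For a flag $\Phi$ and $i\in\{0,1,2\}$, $\Phi^i$ denotes the unique flag differing from $\Phi$ exactly in its vertex ($i=0$), edge ($i=1$) or face ($i=2$). $\mathrm{Aut}(\mathcal M)$ is the group of automorphisms of $\Gamma$ mapping faces to faces; it acts on flags. A map is in class $2_{\{0,1\}}$ if $\mathrm{Aut}(\mathcal M)$ has exactly two orbits on flags and, for every flag $\Phi$, the flags $\Phi^0$ and $\Phi^1$ lie in the orbit of $\Phi$ while $\Phi^2$ does not. (For such maps $\mathrm{Aut}(\mathcal M)$ acts arc-transitively on $\Gamma$.) For an arc-transitive group $G\le \mathrm{Aut}(\Gamma)$, a directed cycle $(v_0,\ldots,v_{r-1})$ is $G$-consistent if some $g\in G$ maps each $v_i$ to $v_{i+1}$ (indices mod $r$); an undirected cycle is $G$-consistent if both its orientations are, and it is $G$-symmetric if moreover some element of $G$ maps one orientation to the other. *)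

theory Defs
  imports Main
begin

text \<open>Faces are abstract elements of F;
  bd f is the set of edges on the boundary of face f.\<close>

definition simple_graph :: "'v set \<Rightarrow> 'v set set \<Rightarrow> bool" where
  "simple_graph V E \<longleftrightarrow> (\<forall>e\<in>E. \<exists>x y. x \<in> V \<and> y \<in> V \<and> x \<noteq> y \<and> e = {x, y})"

definition connected_graph :: "'v set \<Rightarrow> 'v set set \<Rightarrow> bool" where
  "connected_graph V E \<longleftrightarrow> (\<forall>x\<in>V. \<forall>y\<in>V. (x, y) \<in> {(a, b). {a, b} \<in> E}\<^sup>*)"

definition graph_cycle :: "'v set set \<Rightarrow> 'v list \<Rightarrow> bool" where
  "graph_cycle E vs \<longleftrightarrow> length vs \<ge> 3 \<and> distinct vs \<and>
     (\<forall>i < length vs. {vs ! i, vs ! (Suc i mod length vs)} \<in> E)"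

definition cycle_edges :: "'v list \<Rightarrow> 'v set set" where
  "cycle_edges vs = {{vs ! i, vs ! (Suc i mod length vs)} | i. i < length vs}"

definition link_rel :: "'f set \<Rightarrow> ('f \<Rightarrow> 'v set set) \<Rightarrow> 'v \<Rightarrow> ('v set \<times> 'v set) set" where
  "link_rel F bd v = {(e, e'). v \<in> e \<and> v \<in> e' \<and> e \<noteq> e' \<and> (\<exists>f\<in>F. e \<in> bd f \<and> e' \<in> bd f)}"

text \<open>Polytopal map: finite connected simple graph, every face boundary is a cycle of the
  graph, every edge lies on exactly two faces, and around each vertex the faces form a
  single cycle (so the faces glue to a closed surface).\<close>
definition polytopal_map :: "'v set \<Rightarrow> 'v set set \<Rightarrow> 'f set \<Rightarrow> ('f \<Rightarrow> 'v set set) \<Rightarrow> bool" where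
  "polytopal_map V E F bd \<longleftrightarrow>
     finite V \<and> simple_graph V E \<and> connected_graph V E \<and> finite F \<and>
     (\<forall>f\<in>F. \<exists>vs. graph_cycle E vs \<and> cycle_edges vs = bd f) \<and>
     (\<forall>e\<in>E. card {f \<in> F. e \<in> bd f} = 2) \<and>
     (\<forall>v\<in>V. \<forall>e\<in>E. \<forall>e'\<in>E. v \<in> e \<longrightarrow> v \<in> e' \<longrightarrow> (e, e') \<in> (link_rel F bd v)\<^sup>*)"

definition map_aut :: "'v set \<Rightarrow> 'v set set \<Rightarrow> 'f set \<Rightarrow> ('f \<Rightarrow> 'v set set) \<Rightarrow>
    ('v \<Rightarrow> 'v) \<Rightarrow> ('f \<Rightarrow> 'f) \<Rightarrow> bool" where
  "map_aut V E F bd \<sigma> \<tau> \<longleftrightarrow>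
     bij_betw \<sigma> V V \<and> (\<forall>x\<in>V. \<forall>y\<in>V. {x, y} \<in> E \<longleftrightarrow> {\<sigma> x, \<sigma> y} \<in> E) \<and>
     bij_betw \<tau> F F \<and> (\<forall>f\<in>F. bd (\<tau> f) = (\<lambda>e. \<sigma> ` e) ` bd f)"

text \<open>Aut(M) viewed as a group of automorphisms of the underlying graph.\<close>
definition map_aut_group :: "'v set \<Rightarrow> 'v set set \<Rightarrow> 'f set \<Rightarrow> ('f \<Rightarrow> 'v set set) \<Rightarrow> ('v \<Rightarrow> 'v) set" where
  "map_aut_group V E F bd = {\<sigma>. \<exists>\<tau>. map_aut V E F bd \<sigma> \<tau>}"

definition flags :: "'f set \<Rightarrow> ('f \<Rightarrow> 'v set set) \<Rightarrow> ('v \<times> 'v set \<times> 'f) set" where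
  "flags F bd = {(v, e, f). f \<in> F \<and> e \<in> bd f \<and> v \<in> e}"

fun flag_act :: "('v \<Rightarrow> 'v) \<Rightarrow> ('f \<Rightarrow> 'f) \<Rightarrow> 'v \<times> 'v set \<times> 'f \<Rightarrow> 'v \<times> 'v set \<times> 'f" where
  "flag_act \<sigma> \<tau> (v, e, f) = (\<sigma> v, \<sigma> ` e, \<tau> f)"

definition flag_orbit :: "'v set \<Rightarrow> 'v set set \<Rightarrow> 'f set \<Rightarrow> ('f \<Rightarrow> 'v set set) \<Rightarrow>
    'v \<times> 'v set \<times> 'f \<Rightarrow> ('v \<times> 'v set \<times> 'f) set" where
  "flag_orbit V E F bd \<Phi> = {flag_act \<sigma> \<tau> \<Phi> | \<sigma> \<tau>. map_aut V E F bd \<sigma> \<tau>}"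

fun flag_adj0 :: "'v \<times> 'v set \<times> 'f \<Rightarrow> 'v \<times> 'v set \<times> 'f \<Rightarrow> bool" where
  "flag_adj0 (v, e, f) (v', e', f') \<longleftrightarrow> v \<noteq> v' \<and> e = e' \<and> f = f'"
fun flag_adj1 :: "'v \<times> 'v set \<times> 'f \<Rightarrow> 'v \<times> 'v set \<times> 'f \<Rightarrow> bool" where
  "flag_adj1 (v, e, f) (v', e', f') \<longleftrightarrow> v = v' \<and> e \<noteq> e' \<and> f = f'"
fun flag_adj2 :: "'v \<times> 'v set \<times> 'f \<Rightarrow> 'v \<times> 'v set \<times> 'f \<Rightarrow> bool" where
  "flag_adj2 (v, e, f) (v', e', f') \<longleftrightarrow> v = v' \<and> e = e' \<and> f \<noteq> f'"

definition class_2_01 :: "'v set \<Rightarrow> 'v set set \<Rightarrow> 'f set \<Rightarrow> ('f \<Rightarrow> 'v set set) \<Rightarrow> bool" where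
  "class_2_01 V E F bd \<longleftrightarrow>
     polytopal_map V E F bd \<and>
     card (flag_orbit V E F bd ` flags F bd) = 2 \<and>
     (\<forall>\<Phi>\<in>flags F bd. \<forall>\<Psi>\<in>flags F bd.
        (flag_adj0 \<Phi> \<Psi> \<longrightarrow> \<Psi> \<in> flag_orbit V E F bd \<Phi>) \<and>
        (flag_adj1 \<Phi> \<Psi> \<longrightarrow> \<Psi> \<in> flag_orbit V E F bd \<Phi>) \<and>
        (flag_adj2 \<Phi> \<Psi> \<longrightarrow> \<Psi> \<notin> flag_orbit V E F bd \<Phi>))"

definition consistent_dcycle :: "('v \<Rightarrow> 'v) set \<Rightarrow> 'v list \<Rightarrow> bool" where
  "consistent_dcycle G vs \<longleftrightarrow>
     (\<exists>g\<in>G. \<forall>i < length vs. g (vs ! i) = vs ! (Suc i mod length vs))"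

definition symmetric_consistent_cycle :: "('v \<Rightarrow> 'v) set \<Rightarrow> 'v list \<Rightarrow> bool" where
  "symmetric_consistent_cycle G vs \<longleftrightarrow>
     consistent_dcycle G vs \<and> consistent_dcycle G (rev vs) \<and>
     (\<exists>g\<in>G. \<exists>k. \<forall>i < length vs. g (vs ! i) = rev vs ! ((i + k) mod length vs))"

end

theory Submission
  imports Defs
begin

text \<open>An automorphism fixing a face permutes its boundary cycle \<open>v\<^sub>0, v\<^sub>1, ...\<close>, and an
  injection preserving the edges of a cycle is determined by its values at two consecutive
  vertices. In class 2_{0,1} the flag \<open>(v\<^sub>0, v\<^sub>0v\<^sub>1, f)\<close> is mapped to its 0-adjacent flag by an
  automorphism fixing \<open>f\<close>, which is therefore the reflection \<open>j \<mapsto> 1 - j\<close> of the boundary, and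
  \<open>(v\<^sub>1, v\<^sub>1v\<^sub>2, f)\<close> to its 1-adjacent flag by the reflection \<open>j \<mapsto> 2 - j\<close>. The two products of
  these reflections are the rotations \<open>j \<mapsto> j \<plusminus> 1\<close>, so both orientations of the boundary are
  consistent, and either reflection maps the cycle onto its reverse.\<close>

text \<open>Indexing by integers modulo the length turns rotations and reflections of a cycle into
  affine maps of indices.\<close>

definition cyc :: "'v list \<Rightarrow> int \<Rightarrow> 'v" where
  "cyc vs j = vs ! nat (j mod int (length vs))"

lemma cyc_of_nat: "cyc vs (int i) = vs ! (i mod length vs)"
  unfolding cyc_def by (simp flip: zmod_int)

lemma cyc_in_set: "vs \<noteq> [] \<Longrightarrow> cyc vs j \<in> set vs"
  unfolding cyc_def by (simp add: nat_less_iff)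

lemma cyc_cong: "a mod int (length vs) = b mod int (length vs) \<Longrightarrow> cyc vs a = cyc vs b"
  unfolding cyc_def by simp

lemma cyc_eq_iff:
  assumes "distinct vs" "vs \<noteq> []"
  shows "cyc vs a = cyc vs b \<longleftrightarrow> a mod int (length vs) = b mod int (length vs)"
  using assms unfolding cyc_def
  by (simp add: nth_eq_iff_index_eq nat_less_iff eq_nat_nat_iff)

lemma cyc_neq:
  assumes "distinct vs" "0 \<le> a" "a < b" "b < int (length vs)"
  shows "cyc vs a \<noteq> cyc vs b"
proof -
  have "vs \<noteq> []"
    using assms(2-4) by auto
  then show ?thesis
    using assms by (auto simp: cyc_eq_iff mod_pos_pos_trivial)
qed

lemma cyc_rev:
  assumes "vs \<noteq> []"
  shows "cyc (rev vs) j = cyc vs (-1 - j)"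
proof -
  define n where "n = int (length vs)"
  define m where "m = nat (j mod n)"
  have m: "m < length vs" and m_int: "int m = j mod n"
    using assms by (simp_all add: m_def n_def nat_less_iff)
  have "cyc (rev vs) j = vs ! (length vs - Suc m)"
    using m by (simp add: cyc_def m_def n_def rev_nth)
  also have "\<dots> = cyc vs (int (length vs - Suc m))"
    using m by (simp only: cyc_of_nat) simp
  also have "\<dots> = cyc vs (-1 - j)"
  proof (rule cyc_cong)
    have "int (length vs - Suc m) = (-1 - j) + (n + (j - j mod n))"
      using m m_int by (simp add: n_def of_nat_diff)
    moreover have "n dvd n + (j - j mod n)"
      by (simp add: minus_mod_eq_mult_div)
    ultimately show "int (length vs - Suc m) mod int (length vs) = (-1 - j) mod int (length vs)"
      unfolding mod_eq_dvd_iff n_def[symmetric] by simp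
  qed
  finally show ?thesis .
qed

lemma cycle_edges_cyc:
  assumes "vs \<noteq> []"
  shows "cycle_edges vs = range (\<lambda>j. {cyc vs j, cyc vs (j + 1)})"
proof (intro equalityI subsetI)
  fix e assume "e \<in> cycle_edges vs"
  then obtain i where "i < length vs" "e = {vs ! i, vs ! (Suc i mod length vs)}"
    unfolding cycle_edges_def by blast
  then have "e = {cyc vs (int i), cyc vs (int i + 1)}"
    using cyc_of_nat[of vs i] cyc_of_nat[of vs "Suc i"] by (simp add: add.commute)
  then show "e \<in> range (\<lambda>j. {cyc vs j, cyc vs (j + 1)})" by blast
next
  fix e assume "e \<in> range (\<lambda>j. {cyc vs j, cyc vs (j + 1)})"
  then obtain j where e: "e = {cyc vs j, cyc vs (j + 1)}" by blast
  define i where "i = nat (j mod int (length vs))"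
  have i: "i < length vs" and i_int: "int i = j mod int (length vs)"
    using assms by (simp_all add: i_def nat_less_iff)
  have "cyc vs (j + 1) = cyc vs (int (Suc i))"
    by (rule cyc_cong) (simp add: i_int mod_simps ac_simps)
  also have "\<dots> = vs ! (Suc i mod length vs)"
    by (rule cyc_of_nat)
  moreover have "cyc vs j = vs ! i"
    by (simp add: cyc_def i_def)
  ultimately have "e = {vs ! i, vs ! (Suc i mod length vs)}"
    using e by simp
  then show "e \<in> cycle_edges vs"
    using i unfolding cycle_edges_def by blast
qed

lemma cycle_edge_neighbour:
  assumes "distinct vs" "vs \<noteq> []" and "{cyc vs i, x} \<in> cycle_edges vs"
  shows "x = cyc vs (i - 1) \<or> x = cyc vs (i + 1)"
proof -
  obtain j where "{cyc vs i, x} = {cyc vs j, cyc vs (j + 1)}"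
    using assms(2,3) cycle_edges_cyc by blast
  then consider "cyc vs i = cyc vs j" "x = cyc vs (j + 1)"
    | "cyc vs i = cyc vs (j + 1)" "x = cyc vs j"
    by (auto simp: doubleton_eq_iff)
  then show ?thesis
  proof cases
    case 1
    then have "x = cyc vs (i + 1)"
      using assms(1,2) by (auto simp: cyc_eq_iff intro: cyc_cong mod_add_cong)
    then show ?thesis ..
  next
    case 2
    then have "i mod int (length vs) = (j + 1) mod int (length vs)"
      using assms(1,2) by (simp add: cyc_eq_iff)
    then have "(i - 1) mod int (length vs) = (j + 1 - 1) mod int (length vs)"
      by (rule mod_diff_cong) (rule refl)
    then have "x = cyc vs (i - 1)"
      using 2 by (auto intro: cyc_cong)
    then show ?thesis ..
  qed
qed

lemma cycle_reflection_step:
  assumes "distinct vs" "length vs \<ge> 3" "inj_on \<sigma> (set vs)"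
    and "\<And>e. e \<in> cycle_edges vs \<Longrightarrow> \<sigma> ` e \<in> cycle_edges vs"
    and "\<sigma> (cyc vs q) = cyc vs c" "\<sigma> (cyc vs (q + 1)) = cyc vs (c - 1)"
  shows "\<sigma> (cyc vs (q + 2)) = cyc vs (c - 2)"
proof -
  have ne: "vs \<noteq> []" using assms(2) by auto
  have "{cyc vs (q + 1), cyc vs (q + 1 + 1)} \<in> cycle_edges vs"
    using ne cycle_edges_cyc by blast
  then have "{cyc vs (c - 1), \<sigma> (cyc vs (q + 2))} \<in> cycle_edges vs"
    using assms(4)[of "{cyc vs (q + 1), cyc vs (q + 1 + 1)}"] assms(6)
    by (simp add: add.assoc)
  \<comment> \<open>the image of the edge after \<open>q + 1\<close> is an edge at \<open>c - 1\<close>; injectivity forbids going back\<close>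
  then have "\<sigma> (cyc vs (q + 2)) = cyc vs (c - 1 - 1) \<or> \<sigma> (cyc vs (q + 2)) = cyc vs (c - 1 + 1)"
    using cycle_edge_neighbour[OF assms(1) ne] by blast
  moreover have "\<sigma> (cyc vs (q + 2)) \<noteq> \<sigma> (cyc vs q)"
  proof
    assume "\<sigma> (cyc vs (q + 2)) = \<sigma> (cyc vs q)"
    then have "(q + 2) mod int (length vs) = q mod int (length vs)"
      using inj_onD[OF assms(3)] cyc_in_set[OF ne] cyc_eq_iff[OF assms(1) ne] by metis
    then have "int (length vs) dvd 2"
      by (simp add: mod_eq_dvd_iff)
    then show False
      using assms(2) zdvd_imp_le[of "int (length vs)" 2] by simp
  qed
  ultimately show ?thesis
    using assms(5) by (simp add: diff_diff_eq)
qed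

lemma cycle_reflection_rigid:
  assumes "distinct vs" "length vs \<ge> 3" "inj_on \<sigma> (set vs)"
    and "\<And>e. e \<in> cycle_edges vs \<Longrightarrow> \<sigma> ` e \<in> cycle_edges vs"
    and "\<sigma> (cyc vs p) = cyc vs (c - p)" "\<sigma> (cyc vs (p + 1)) = cyc vs (c - (p + 1))"
  shows "\<sigma> (cyc vs j) = cyc vs (c - j)"
proof -
  have along: "\<sigma> (cyc vs (p + int m)) = cyc vs (c - (p + int m)) \<and>
      \<sigma> (cyc vs (p + int m + 1)) = cyc vs (c - (p + int m + 1))" for m :: nat
  proof (induction m)
    case 0
    then show ?case using assms(5,6) by simp
  next
    case (Suc m)
    have "\<sigma> (cyc vs (p + int m + 2)) = cyc vs (c - (p + int m) - 2)"
      by (rule cycle_reflection_step[OF assms(1-4)]) (use Suc.IH in \<open>simp_all add: algebra_simps\<close>)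
    then show ?case
      using Suc by (simp add: algebra_simps)
  qed
  define n where "n = int (length vs)"
  define m where "m = nat ((j - p) mod n)"
  have "n > 0"
    using assms(2) by (auto simp: n_def)
  then have m: "int m = (j - p) mod n"
    by (simp add: m_def)
  have "cyc vs j = cyc vs (p + int m)"
    by (rule cyc_cong) (simp add: m n_def mod_simps)
  moreover have "cyc vs (c - j) = cyc vs (c - p - int m)"
    by (rule cyc_cong) (simp add: m n_def mod_simps)
  ultimately show ?thesis
    using along[of m] by (simp add: diff_diff_eq)
qed

lemma consistent_dcycle_of_rotation:
  assumes "g \<in> G" "\<And>j. g (cyc vs j) = cyc vs (j + 1)"
  shows "consistent_dcycle G vs"
  unfolding consistent_dcycle_def
proof (intro bexI[OF _ assms(1)] allI impI)
  fix i assume "i < length vs"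
  then have "g (vs ! i) = g (cyc vs (int i))"
    by (simp add: cyc_of_nat)
  also have "\<dots> = cyc vs (int i + 1)"
    by (rule assms(2))
  also have "\<dots> = vs ! (Suc i mod length vs)"
    using cyc_of_nat[of vs "Suc i"] by (simp add: add.commute)
  finally show "g (vs ! i) = vs ! (Suc i mod length vs)" .
qed

lemma consistent_dcycle_rev_of_rotation:
  assumes "vs \<noteq> []" "g \<in> G" "\<And>j. g (cyc vs j) = cyc vs (j - 1)"
  shows "consistent_dcycle G (rev vs)"
proof (rule consistent_dcycle_of_rotation[OF assms(2)])
  fix j
  show "g (cyc (rev vs) j) = cyc (rev vs) (j + 1)"
    using assms(1,3) by (simp add: cyc_rev algebra_simps)
qed

lemma reflection_maps_onto_rev:
  assumes "vs \<noteq> []" "\<And>j. g (cyc vs j) = cyc vs (c - j)"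
  shows "\<exists>k. \<forall>i < length vs. g (vs ! i) = rev vs ! ((i + k) mod length vs)"
proof (intro exI allI impI)
  define n where "n = int (length vs)"
  define k where "k = nat ((-1 - c) mod n)"
  have k: "int k = (-1 - c) mod n"
    using assms(1) by (simp add: k_def n_def)
  fix i assume "i < length vs"
  then have "g (vs ! i) = cyc vs (c - int i)"
    using assms(2)[of "int i"] by (simp add: cyc_of_nat)
  also have "\<dots> = cyc vs (-1 - int (i + k))"
    by (rule cyc_cong) (simp add: k n_def mod_simps diff_diff_eq[symmetric])
  also have "\<dots> = rev vs ! ((i + k) mod length vs)"
    using cyc_rev[OF assms(1), of "int (i + k)"] cyc_of_nat[of "rev vs" "i + k"] by simp
  finally show "g (vs ! i) = rev vs ! ((i + k) mod length vs)" .
qed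

lemma map_aut_comp:
  assumes "map_aut V E F bd \<sigma> \<tau>" "map_aut V E F bd \<sigma>' \<tau>'"
  shows "map_aut V E F bd (\<sigma>' \<circ> \<sigma>) (\<tau>' \<circ> \<tau>)"
proof -
  have bij: "bij_betw \<sigma> V V" "bij_betw \<tau> F F" "bij_betw \<sigma>' V V" "bij_betw \<tau>' F F"
    and edges: "\<forall>x\<in>V. \<forall>y\<in>V. {x, y} \<in> E \<longleftrightarrow> {\<sigma> x, \<sigma> y} \<in> E"
      "\<forall>x\<in>V. \<forall>y\<in>V. {x, y} \<in> E \<longleftrightarrow> {\<sigma>' x, \<sigma>' y} \<in> E"
    and faces: "\<forall>f\<in>F. bd (\<tau> f) = (\<lambda>e. \<sigma> ` e) ` bd f"
      "\<forall>f\<in>F. bd (\<tau>' f) = (\<lambda>e. \<sigma>' ` e) ` bd f"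
    using assms unfolding map_aut_def by auto
  have "\<sigma> x \<in> V" if "x \<in> V" for x
    using bij(1) that by (auto dest: bij_betwE)
  moreover have "\<tau> f \<in> F" if "f \<in> F" for f
    using bij(2) that by (auto dest: bij_betwE)
  ultimately show ?thesis
    unfolding map_aut_def using bij edges faces
    by (simp add: bij_betw_trans image_comp)
qed

lemma map_aut_group_comp:
  "\<sigma> \<in> map_aut_group V E F bd \<Longrightarrow> \<sigma>' \<in> map_aut_group V E F bd \<Longrightarrow>
    \<sigma>' \<circ> \<sigma> \<in> map_aut_group V E F bd"
  unfolding map_aut_group_def by (blast intro: map_aut_comp)

lemma graph_cycle_vertices:
  assumes "simple_graph V E" "graph_cycle E vs"
  shows "set vs \<subseteq> V"
proof
  fix x assume "x \<in> set vs"
  then obtain i where "i < length vs" "x = vs ! i"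
    by (auto simp: in_set_conv_nth)
  then have "{x, vs ! (Suc i mod length vs)} \<in> E"
    using assms(2) unfolding graph_cycle_def by blast
  then show "x \<in> V"
    using assms(1) unfolding simple_graph_def by (fastforce simp: doubleton_eq_iff)
qed

lemma face_stabiliser_reflection:
  assumes "simple_graph V E" "f \<in> F" "graph_cycle E vs" "cycle_edges vs = bd f"
    and "map_aut V E F bd \<sigma> \<tau>" "\<tau> f = f"
    and "\<sigma> (cyc vs p) = cyc vs (c - p)" "\<sigma> (cyc vs (p + 1)) = cyc vs (c - (p + 1))"
  shows "\<sigma> (cyc vs j) = cyc vs (c - j)"
proof (rule cycle_reflection_rigid[OF _ _ _ _ assms(7,8)])
  show "distinct vs" "length vs \<ge> 3"
    using assms(3) unfolding graph_cycle_def by auto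
  show "inj_on \<sigma> (set vs)"
    using assms(5) graph_cycle_vertices[OF assms(1,3)] unfolding map_aut_def
    by (meson bij_betw_imp_inj_on inj_on_subset)
  have "bd (\<tau> f) = (\<lambda>e. \<sigma> ` e) ` bd f"
    using assms(2,5) unfolding map_aut_def by blast
  then have "(\<lambda>e. \<sigma> ` e) ` bd f = bd f"
    using assms(6) by simp
  then show "\<sigma> ` e \<in> cycle_edges vs" if "e \<in> cycle_edges vs" for e
    using that assms(4) by blast
qed

lemma face_flags:
  assumes "f \<in> F" "cycle_edges vs = bd f" "vs \<noteq> []"
  shows "(cyc vs j, {cyc vs j, cyc vs (j + 1)}, f) \<in> flags F bd"
    and "(cyc vs (j + 1), {cyc vs j, cyc vs (j + 1)}, f) \<in> flags F bd"
  using assms cycle_edges_cyc[OF assms(3)] unfolding flags_def by auto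

lemma class_2_01_simple_graph: "class_2_01 V E F bd \<Longrightarrow> simple_graph V E"
  unfolding class_2_01_def polytopal_map_def by blast

lemma class_2_01_flag_adj0_orbit:
  "class_2_01 V E F bd \<Longrightarrow> \<Phi> \<in> flags F bd \<Longrightarrow> \<Psi> \<in> flags F bd \<Longrightarrow> flag_adj0 \<Phi> \<Psi> \<Longrightarrow>
    \<Psi> \<in> flag_orbit V E F bd \<Phi>"
  unfolding class_2_01_def by blast

lemma class_2_01_flag_adj1_orbit:
  "class_2_01 V E F bd \<Longrightarrow> \<Phi> \<in> flags F bd \<Longrightarrow> \<Psi> \<in> flags F bd \<Longrightarrow> flag_adj1 \<Phi> \<Psi> \<Longrightarrow>
    \<Psi> \<in> flag_orbit V E F bd \<Phi>"
  unfolding class_2_01_def by blast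

lemma class_2_01_vertex_reflection:
  assumes "class_2_01 V E F bd" "f \<in> F" "graph_cycle E vs" "cycle_edges vs = bd f"
  obtains \<sigma> where "\<sigma> \<in> map_aut_group V E F bd" "\<And>j. \<sigma> (cyc vs j) = cyc vs (1 - j)"
proof -
  have d: "distinct vs" and l: "length vs \<ge> 3"
    using assms(3) unfolding graph_cycle_def by auto
  then have ne: "vs \<noteq> []" by auto
  define e where "e = {cyc vs 0, cyc vs 1}"
  have "cyc vs 0 \<noteq> cyc vs 1"
    using d l by (intro cyc_neq) auto
  moreover have "(cyc vs 0, e, f) \<in> flags F bd" "(cyc vs 1, e, f) \<in> flags F bd"
    using face_flags[where bd = bd, OF assms(2,4) ne, of 0] by (simp_all add: e_def)
  ultimately have "(cyc vs 1, e, f) \<in> flag_orbit V E F bd (cyc vs 0, e, f)"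
    by (intro class_2_01_flag_adj0_orbit[OF assms(1)]) simp_all
  then obtain \<sigma> \<tau> where aut: "map_aut V E F bd \<sigma> \<tau>"
    and \<sigma>0: "\<sigma> (cyc vs 0) = cyc vs 1" and "\<sigma> ` e = e" and stab: "\<tau> f = f"
    unfolding flag_orbit_def by auto
  then have \<sigma>1: "\<sigma> (cyc vs 1) = cyc vs 0"
    using \<open>cyc vs 0 \<noteq> cyc vs 1\<close> unfolding e_def by (auto simp: doubleton_eq_iff)
  have refl: "\<sigma> (cyc vs j) = cyc vs (1 - j)" for j
    using face_stabiliser_reflection[OF class_2_01_simple_graph[OF assms(1)] assms(2-4) aut stab,
        where p = 0 and c = 1] \<sigma>0 \<sigma>1
    by simp
  have "\<sigma> \<in> map_aut_group V E F bd"
    using aut unfolding map_aut_group_def by blast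
  then show thesis
    using refl by (rule that)
qed

lemma class_2_01_edge_reflection:
  assumes "class_2_01 V E F bd" "f \<in> F" "graph_cycle E vs" "cycle_edges vs = bd f"
  obtains \<sigma> where "\<sigma> \<in> map_aut_group V E F bd" "\<And>j. \<sigma> (cyc vs j) = cyc vs (2 - j)"
proof -
  have d: "distinct vs" and l: "length vs \<ge> 3"
    using assms(3) unfolding graph_cycle_def by auto
  then have ne: "vs \<noteq> []" by auto
  define e0 where "e0 = {cyc vs 0, cyc vs 1}"
  define e1 where "e1 = {cyc vs 1, cyc vs 2}"
  have "cyc vs 0 \<noteq> cyc vs 1" "cyc vs 0 \<noteq> cyc vs 2" "cyc vs 1 \<noteq> cyc vs 2"
    using cyc_neq[OF d, of 0 1] cyc_neq[OF d, of 0 2] cyc_neq[OF d, of 1 2] l by auto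
  then have "e1 \<noteq> e0"
    unfolding e0_def e1_def by (auto simp: doubleton_eq_iff)
  moreover have "(cyc vs 1, e1, f) \<in> flags F bd" "(cyc vs 1, e0, f) \<in> flags F bd"
    using face_flags(1)[where bd = bd, OF assms(2,4) ne, of 1]
      face_flags(2)[where bd = bd, OF assms(2,4) ne, of 0]
    by (simp_all add: e0_def e1_def)
  ultimately have "(cyc vs 1, e0, f) \<in> flag_orbit V E F bd (cyc vs 1, e1, f)"
    by (intro class_2_01_flag_adj1_orbit[OF assms(1)]) simp_all
  then obtain \<sigma> \<tau> where aut: "map_aut V E F bd \<sigma> \<tau>"
    and \<sigma>1: "\<sigma> (cyc vs 1) = cyc vs 1" and "\<sigma> ` e1 = e0" and stab: "\<tau> f = f"
    unfolding flag_orbit_def by auto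
  then have \<sigma>2: "\<sigma> (cyc vs 2) = cyc vs 0"
    using \<open>cyc vs 0 \<noteq> cyc vs 1\<close> unfolding e0_def e1_def by (auto simp: doubleton_eq_iff)
  have refl: "\<sigma> (cyc vs j) = cyc vs (2 - j)" for j
    using face_stabiliser_reflection[OF class_2_01_simple_graph[OF assms(1)] assms(2-4) aut stab,
        where p = 1 and c = 2] \<sigma>1 \<sigma>2
    by simp
  have "\<sigma> \<in> map_aut_group V E F bd"
    using aut unfolding map_aut_group_def by blast
  then show thesis
    using refl by (rule that)
qed

theorem lemma2p5:
  fixes V :: "'v set" and E :: "'v set set" and F :: "'f set" and bd :: "'f \<Rightarrow> 'v set set"
  assumes "class_2_01 V E F bd"
    and "f \<in> F"
    and "graph_cycle E vs" and "cycle_edges vs = bd f"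
  shows "symmetric_consistent_cycle (map_aut_group V E F bd) vs"
proof -
  have ne: "vs \<noteq> []"
    using assms(3) unfolding graph_cycle_def by auto
  obtain \<sigma>0 where G0: "\<sigma>0 \<in> map_aut_group V E F bd"
    and refl0: "\<And>j. \<sigma>0 (cyc vs j) = cyc vs (1 - j)"
    using class_2_01_vertex_reflection[OF assms] by blast
  obtain \<sigma>1 where G1: "\<sigma>1 \<in> map_aut_group V E F bd"
    and refl1: "\<And>j. \<sigma>1 (cyc vs j) = cyc vs (2 - j)"
    using class_2_01_edge_reflection[OF assms] by blast
  have "consistent_dcycle (map_aut_group V E F bd) vs"
    by (rule consistent_dcycle_of_rotation[OF map_aut_group_comp[OF G0 G1]])
      (simp add: refl0 refl1 algebra_simps)
  moreover have "consistent_dcycle (map_aut_group V E F bd) (rev vs)"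
    by (rule consistent_dcycle_rev_of_rotation[OF ne map_aut_group_comp[OF G1 G0]])
      (simp add: refl0 refl1 algebra_simps)
  moreover have "\<exists>k. \<forall>i < length vs. \<sigma>0 (vs ! i) = rev vs ! ((i + k) mod length vs)"
    using reflection_maps_onto_rev[OF ne refl0] .
  ultimately show ?thesis
    unfolding symmetric_consistent_cycle_def using G0 by blast
qed

end
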